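(* Let $n\ge3$ be odd, $d,R\in\mathbb{Q}$, $d\ne0$, $R$ not a square, $D=d^2-R$, let $\zeta$ be a primitive $n$th root of unity in $\mathbb{C}$ and $K=\mathbb{Q}(\sqrt R(\zeta-\zeta^{-1}))$. Let $u\in\mathbb{C}$ be any zero of $f_n=f_n(Z,d,R)$ and $L\subseteq\mathbb{C}$ the splitting field of $f_n$ over $\mathbb{Q}$. Then $L$ is the composite field $\mathbb{Q}(u)\cdot K$.
   Context: $f_n(Z,d,R)=\sum_{j=0}^{(n-1)/2}(-1)^j\frac{n}{n-j}\binom{n-j}{j}D^jZ^{n-2j}-2dD^{(n-1)/2}$, which equals $\sqrt D^{\,n}F_n(Z/\sqrt D)-2dD^{(n-1)/2}$ where $F_n(Z)=2T_n(Z/2)$ and $T_n$ is the Chebyshev polynomial of the first kind. *)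

theory Defs
  imports "HOL-Computational_Algebra.Polynomial" Complex_Main
begin

definition f_poly :: "nat \<Rightarrow> rat \<Rightarrow> rat \<Rightarrow> rat poly" where
  "f_poly n d R =
     (let D = d^2 - R in
       (\<Sum>j\<in>{0..(n - 1) div 2}.
          monom ((-1)^j * (of_nat n / of_nat (n - j)) * of_nat ((n - j) choose j) * D^j) (n - 2*j))
       - [: 2 * d * D ^ ((n - 1) div 2) :])"

definition is_subfield :: "complex set \<Rightarrow> bool" where
  "is_subfield F \<longleftrightarrow> 0 \<in> F \<and> 1 \<in> F \<and>
     (\<forall>x\<in>F. \<forall>y\<in>F. x + y \<in> F \<and> x * y \<in> F) \<and>
     (\<forall>x\<in>F. - x \<in> F \<and> inverse x \<in> F)"

definition gen_field :: "complex set \<Rightarrow> complex set" where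
  "gen_field S = \<Inter> {F. S \<subseteq> F \<and> is_subfield F}"

definition splitting_field :: "rat poly \<Rightarrow> complex set" where
  "splitting_field p = gen_field {z. poly (map_poly of_rat p) z = 0}"

definition composite :: "complex set \<Rightarrow> complex set \<Rightarrow> complex set" where
  "composite F G = gen_field (F \<union> G)"

definition primitive_root_unity :: "nat \<Rightarrow> complex \<Rightarrow> bool" where
  "primitive_root_unity n z \<longleftrightarrow> z ^ n = 1 \<and> (\<forall>k. 0 < k \<and> k < n \<longrightarrow> z ^ k \<noteq> 1)"

end

theory Submission
  imports Defs
begin

text \<open>
  With D = d^2 - R and k = (n-1)/2, the sum defining f_n is the Dickson polynomial D_n(Z, D),
  so for a b = D one gets f_n(a + b) = a^n + b^n - 2 d D^k.  Splitting a root u = a + b this way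
  forces {a^n, b^n} = {D^k (d + sqrt R), D^k (d - sqrt R)}, and the roots of f_n are exactly the
  numbers a \<zeta>^j + b \<zeta>^-j.  Writing such a root as
  ((a + b)(\<zeta>^j + \<zeta>^-j) + (a - b)(\<zeta>^j - \<zeta>^-j)) / 2 with
  (a - b) V = 2 D^k sqrt R, where V = (a^n - b^n)/(a - b) is a polynomial in a + b and a b,
  puts it into Q(u) K: the numbers \<zeta>^j + \<zeta>^-j and sqrt R (\<zeta>^j - \<zeta>^-j) satisfy a
  Lucas recurrence whose initial values lie in K = Q(\<tau>), \<tau> = sqrt R (\<zeta> - \<zeta>^-1), because
  \<tau>^2 = R (\<zeta>^2 + \<zeta>^-2 - 2) and, n being odd, \<zeta> = (\<zeta>^2)^(k+1).  Conversely
  \<tau> = (u1 - u2) V / (2 D^k) for the two roots u1 = a \<zeta> + b \<zeta>^-1, u2 = a \<zeta>^-1 + b \<zeta>.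
\<close>

section \<open>Dickson polynomials\<close>

definition complete_hom :: "'a::comm_semiring_1 \<Rightarrow> 'a \<Rightarrow> nat \<Rightarrow> 'a" where
  "complete_hom a b N = (\<Sum>i\<le>N. a^i * b^(N-i))"

definition dickson_E :: "nat \<Rightarrow> 'a::comm_ring_1 \<Rightarrow> 'a \<Rightarrow> 'a" where
  "dickson_E N D Z = (\<Sum>j\<le>N. (-1)^j * of_nat ((N-j) choose j) * D^j * Z^(N-2*j))"

text \<open>The summation range is the right one for odd m only.\<close>

definition dickson_D :: "nat \<Rightarrow> 'a::field_char_0 \<Rightarrow> 'a \<Rightarrow> 'a" where
  "dickson_D m D Z =
     (\<Sum>j\<in>{0..(m-1) div 2}. (-1)^j * (of_nat m / of_nat (m-j)) * of_nat ((m-j) choose j) * D^j * Z^(m-2*j))"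

lemma complete_hom_Suc_left: "complete_hom a b (Suc N) = a * complete_hom a b N + b^Suc N"
  unfolding complete_hom_def by (subst sum.atMost_Suc_shift) (simp add: sum_distrib_left mult_ac add.commute)

lemma complete_hom_Suc_right: "complete_hom a b (Suc N) = b * complete_hom a b N + a^Suc N"
  unfolding complete_hom_def by (simp add: sum_distrib_left Suc_diff_le mult_ac)

lemma complete_hom_Suc_Suc:
  fixes a b :: "'a::comm_ring_1"
  shows "complete_hom a b (Suc (Suc N)) = (a+b) * complete_hom a b (Suc N) - (a*b) * complete_hom a b N"
  using complete_hom_Suc_left[of a b "Suc N"] complete_hom_Suc_left[of a b N]
  by (simp add: algebra_simps)

lemma diff_times_complete_hom:
  fixes a b :: "'a::comm_ring_1"
  shows "(a - b) * complete_hom a b N = a^Suc N - b^Suc N"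
  using complete_hom_Suc_left[of a b N] complete_hom_Suc_right[of a b N]
  by (simp add: algebra_simps)

lemma dickson_E_Suc_Suc:
  fixes Z D :: "'a::comm_ring_1"
  shows "dickson_E (Suc (Suc N)) D Z = Z * dickson_E (Suc N) D Z - D * dickson_E N D Z"
proof -
  have shift: "of_nat ((N-i) choose Suc i) * Z * Z^(N - Suc (2*i)) = of_nat ((N-i) choose Suc i) * Z^(N-2*i)" for i
  proof (cases "Suc i \<le> N - i")
    case True
    then have "N - 2*i = Suc (N - Suc (2*i))" by arith
    then show ?thesis by simp
  qed (simp add: binomial_eq_0)
  have lhs: "dickson_E (Suc (Suc N)) D Z = Z^Suc (Suc N) +
     (\<Sum>i\<le>N. (-1)^Suc i * of_nat (((N-i) choose Suc i) + ((N-i) choose i)) * D^Suc i * Z^(N-2*i))"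
    unfolding dickson_E_def
    by (subst sum.atMost_Suc_shift, subst sum.atMost_Suc) (auto intro!: sum.cong simp: Suc_diff_le add.commute)
  have "Z * dickson_E (Suc N) D Z = Z^Suc (Suc N) +
     (\<Sum>i\<le>N. (-1)^Suc i * D^Suc i * (of_nat ((N-i) choose Suc i) * Z * Z^(N - Suc (2*i))))"
    unfolding dickson_E_def by (subst sum.atMost_Suc_shift) (simp add: distrib_left sum_distrib_left mult_ac)
  also have "\<dots> = Z^Suc (Suc N) +
     (\<Sum>i\<le>N. (-1)^Suc i * of_nat ((N-i) choose Suc i) * D^Suc i * Z^(N-2*i))"
    by (simp only: shift) (simp add: mult_ac)
  finally have rhs1: "Z * dickson_E (Suc N) D Z = \<dots>" .
  have rhs2: "D * dickson_E N D Z = (\<Sum>i\<le>N. (-1)^i * of_nat ((N-i) choose i) * D^Suc i * Z^(N-2*i))"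
    unfolding dickson_E_def by (simp add: sum_distrib_left mult_ac)
  show ?thesis unfolding lhs rhs1 rhs2
    by (simp add: algebra_simps sum_subtractf[symmetric] sum.distrib[symmetric])
qed

lemma dickson_E_sum_prod:
  fixes a b :: "'a::comm_ring_1"
  shows "dickson_E N (a*b) (a+b) = complete_hom a b N"
proof -
  have "dickson_E N (a*b) (a+b) = complete_hom a b N \<and>
        dickson_E (Suc N) (a*b) (a+b) = complete_hom a b (Suc N)"
  proof (induction N)
    case 0
    show ?case by (simp add: dickson_E_def complete_hom_def)
  qed (simp add: dickson_E_Suc_Suc complete_hom_Suc_Suc)
  then show ?thesis ..
qed

lemma dickson_coeff_split:
  assumes "j < m"
  shows "(of_nat m / of_nat (m - j) * of_nat ((m - j) choose j) :: 'a::field_char_0)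
     = of_nat ((m - j) choose j) + (if j = 0 then 0 else of_nat ((m - j - 1) choose (j - 1)))"
proof (cases j)
  case 0
  with assms show ?thesis by simp
next
  case (Suc i)
  define N where "N = m - j - 1"
  have mj: "m - j = Suc N" and m: "of_nat m = (of_nat (Suc N) + of_nat (Suc i) :: 'a)"
    using assms Suc by (simp_all add: N_def)
  have field: "(n + i) / n * c = c + x" if "n \<noteq> 0" "c * i = n * x" for n i c x :: 'a
    using that by (simp add: field_simps)
  have "(of_nat (Suc N choose Suc i) * of_nat (Suc i) :: 'a) = of_nat (Suc N) * of_nat (N choose i)"
    using arg_cong[OF Suc_times_binomial_eq[of N i], of "of_nat :: nat \<Rightarrow> 'a"]
    by (simp only: of_nat_mult)
  from field[OF of_nat_neq_0 this] show ?thesis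
    unfolding m mj by (simp add: Suc)
qed

lemma dickson_E_restrict:
  assumes "m = 2*k+1"
  shows "dickson_E m D Z = (\<Sum>j\<in>{0..k}. (-1)^j * of_nat ((m-j) choose j) * D^j * Z^(m-2*j))"
  unfolding dickson_E_def
  by (rule sum.mono_neutral_right) (use assms in \<open>auto simp: binomial_eq_0\<close>)

lemma dickson_D_eq_dickson_E:
  fixes D Z :: "'a::field_char_0"
  assumes "odd m" "m \<ge> 3"
  shows "dickson_D m D Z = dickson_E m D Z - D * dickson_E (m-2) D Z"
proof -
  obtain k0 where "m = 2*k0 + 1" using assms(1) by (auto elim: oddE)
  with assms(2) obtain k where m: "m = 2*Suc k + 1" by (cases k0) auto
  then have k: "(m-1) div 2 = Suc k" and m2: "m - 2 = 2*k+1" by simp_all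
  let ?t = "\<lambda>c j. (-1)^j * c * D^j * Z^(m-2*j)"
  have "dickson_D m D Z = (\<Sum>j\<in>{0..Suc k}. ?t (of_nat ((m-j) choose j)) j)
     + (\<Sum>j\<in>{0..Suc k}. ?t (if j = 0 then 0 else of_nat ((m-j-1) choose (j-1))) j)"
    unfolding dickson_D_def k sum.distrib[symmetric]
  proof (rule sum.cong[OF refl])
    fix j assume "j \<in> {0..Suc k}"
    then have "j < m" using m by simp
    have "(-1)^j * (of_nat m / of_nat (m-j)) * of_nat ((m-j) choose j) * D^j * Z^(m-2*j)
       = (-1)^j * D^j * Z^(m-2*j) * (of_nat m / of_nat (m-j) * of_nat ((m-j) choose j))"
      by (simp only: mult_ac)
    then show "(-1)^j * (of_nat m / of_nat (m-j)) * of_nat ((m-j) choose j) * D^j * Z^(m-2*j) =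
        ?t (of_nat ((m-j) choose j)) j + ?t (if j = 0 then 0 else of_nat ((m-j-1) choose (j-1))) j"
      unfolding dickson_coeff_split[OF \<open>j < m\<close>] by (simp add: algebra_simps)
  qed
  also have "(\<Sum>j\<in>{0..Suc k}. ?t (of_nat ((m-j) choose j)) j) = dickson_E m D Z"
    by (simp only: dickson_E_restrict[OF m])
  also have "(\<Sum>j\<in>{0..Suc k}. ?t (if j = 0 then 0 else of_nat ((m-j-1) choose (j-1))) j)
     = - D * (\<Sum>i\<in>{0..k}. (-1)^i * of_nat (((m-2)-i) choose i) * D^i * Z^((m-2)-2*i))"
  proof -
    have shift: "?t (if Suc i = 0 then 0 else of_nat ((m - Suc i - 1) choose (Suc i - 1))) (Suc i)
        = - D * ((-1)^i * of_nat ((m-2-i) choose i) * D^i * Z^(m-2-2*i))" for i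
    proof -
      have "m - Suc i - 1 = m - 2 - i" "m - 2 * Suc i = m - 2 - 2 * i" by simp_all
      then show ?thesis by (simp add: mult_ac)
    qed
    show ?thesis
      unfolding atLeast0AtMost sum_distrib_left
      by (subst sum.atMost_Suc_shift) (simp only: shift, simp)
  qed
  also have "(\<Sum>i\<in>{0..k}. (-1)^i * of_nat (((m-2)-i) choose i) * D^i * Z^((m-2)-2*i)) = dickson_E (m-2) D Z"
    using dickson_E_restrict[OF m2, where D=D and Z=Z] by simp
  finally show ?thesis by simp
qed

lemma dickson_D_sum_prod:
  fixes a b :: "'a::field_char_0"
  assumes "odd m"
  shows "dickson_D m (a*b) (a+b) = a^m + b^m"
proof (cases "m = 1")
  case False
  with assms have m3: "m \<ge> 3" by (auto elim!: oddE)
  then have "m = Suc (Suc (m-2))" by simp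
  then obtain M where M: "m = Suc (Suc M)" by blast
  have "dickson_D m (a*b) (a+b) = complete_hom a b (Suc (Suc M)) - (a*b) * complete_hom a b M"
    unfolding dickson_D_eq_dickson_E[OF assms m3] dickson_E_sum_prod by (simp add: M)
  then show ?thesis
    using complete_hom_Suc_left[of a b "Suc M"] complete_hom_Suc_right[of a b M]
    by (simp add: M algebra_simps)
qed (simp add: dickson_D_def)

section \<open>Subfields of the complex numbers\<close>

lemma is_subfield_gen_field: "is_subfield (gen_field S)"
  unfolding is_subfield_def gen_field_def by auto

lemma gen_field_superset: "S \<subseteq> gen_field S"
  unfolding gen_field_def by auto

lemma gen_field_least: "S \<subseteq> F \<Longrightarrow> is_subfield F \<Longrightarrow> gen_field S \<subseteq> F"
  unfolding gen_field_def by auto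

lemma gen_field_eqI: "S \<subseteq> gen_field T \<Longrightarrow> T \<subseteq> gen_field S \<Longrightarrow> gen_field S = gen_field T"
  by (intro equalityI gen_field_least is_subfield_gen_field)

lemma gen_field_mono: "S \<subseteq> T \<Longrightarrow> gen_field S \<subseteq> gen_field T"
  unfolding gen_field_def by auto

lemma composite_gen_field: "composite (gen_field S) (gen_field T) = gen_field (S \<union> T)"
  unfolding composite_def
proof (rule gen_field_eqI)
  show "gen_field S \<union> gen_field T \<subseteq> gen_field (S \<union> T)"
    by (simp add: gen_field_mono)
  have "S \<union> T \<subseteq> gen_field S \<union> gen_field T"
    using gen_field_superset by blast
  also have "\<dots> \<subseteq> gen_field (gen_field S \<union> gen_field T)"
    by (rule gen_field_superset)
  finally show "S \<union> T \<subseteq> gen_field (gen_field S \<union> gen_field T)" .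
qed

context
  fixes F :: "complex set"
  assumes F: "is_subfield F"
begin

lemma subfield_add: "x \<in> F \<Longrightarrow> y \<in> F \<Longrightarrow> x + y \<in> F"
  and subfield_mult: "x \<in> F \<Longrightarrow> y \<in> F \<Longrightarrow> x * y \<in> F"
  and subfield_uminus: "x \<in> F \<Longrightarrow> - x \<in> F"
  and subfield_inverse: "x \<in> F \<Longrightarrow> inverse x \<in> F"
  and subfield_0: "0 \<in> F"
  and subfield_1: "1 \<in> F"
  using F unfolding is_subfield_def by auto

lemma subfield_diff: "x \<in> F \<Longrightarrow> y \<in> F \<Longrightarrow> x - y \<in> F"
  using subfield_add[of x "- y"] subfield_uminus[of y] by simp

lemma subfield_divide: "x \<in> F \<Longrightarrow> y \<in> F \<Longrightarrow> x / y \<in> F"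
  using subfield_mult[of x "inverse y"] subfield_inverse[of y] by (simp add: divide_inverse)

lemma subfield_power: "x \<in> F \<Longrightarrow> x ^ m \<in> F"
  by (induction m) (auto intro: subfield_mult subfield_1)

lemma subfield_of_nat: "of_nat m \<in> F"
  by (induction m) (auto intro: subfield_add subfield_1 subfield_0)

lemma subfield_numeral: "numeral m \<in> F"
  using subfield_of_nat[of "numeral m"] by simp

lemma subfield_of_int: "of_int m \<in> F"
proof -
  have "of_int m = of_nat (nat m) - (of_nat (nat (- m)) :: complex)"
    by (cases "m \<ge> 0") simp_all
  then show ?thesis by (simp add: subfield_diff subfield_of_nat)
qed

lemma subfield_of_rat: "of_rat q \<in> F"
proof -
  obtain a b where "quotient_of q = (a, b)" by (cases "quotient_of q")
  then have "q = of_int a / of_int b" by (rule quotient_of_div)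
  then have "of_rat q = (of_int a / of_int b :: complex)" by (simp add: of_rat_divide)
  then show ?thesis by (simp add: subfield_divide subfield_of_int)
qed

lemma subfield_sum: "(\<And>i. i \<in> I \<Longrightarrow> g i \<in> F) \<Longrightarrow> sum g I \<in> F"
  by (induction I rule: infinite_finite_induct) (auto intro: subfield_add subfield_0)

lemma subfield_dickson_E: "D \<in> F \<Longrightarrow> Z \<in> F \<Longrightarrow> dickson_E N D Z \<in> F"
  unfolding dickson_E_def
  by (intro subfield_sum subfield_mult subfield_power subfield_of_nat subfield_uminus subfield_1)

lemma subfield_lucas:
  assumes xy: "x * y = 1" and "x + y \<in> F" "\<alpha> + \<beta> \<in> F" "\<alpha> * x + \<beta> * y \<in> F"
  shows "\<alpha> * x^j + \<beta> * y^j \<in> F"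
proof -
  have rec: "\<alpha> * x^Suc (Suc i) + \<beta> * y^Suc (Suc i)
      = (x + y) * (\<alpha> * x^Suc i + \<beta> * y^Suc i) - (\<alpha> * x^i + \<beta> * y^i)" for i
  proof -
    have "(x + y) * (\<alpha> * x^Suc i + \<beta> * y^Suc i) - (\<alpha> * x^i + \<beta> * y^i)
        = \<alpha> * x^Suc (Suc i) + \<beta> * y^Suc (Suc i) + (x * y - 1) * (\<alpha> * x^i + \<beta> * y^i)"
      by (simp add: algebra_simps)
    then show ?thesis using xy by simp
  qed
  have "\<alpha> * x^j + \<beta> * y^j \<in> F \<and> \<alpha> * x^Suc j + \<beta> * y^Suc j \<in> F"
  proof (induction j)
    case (Suc j)
    then show ?case by (simp only: rec) (blast intro: subfield_diff subfield_mult assms(2))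
  qed (use assms in simp)
  then show ?thesis ..
qed

end

section \<open>The roots of f_n\<close>

lemma power_of_primitive_root_unity:
  assumes \<zeta>: "primitive_root_unity n \<zeta>" and n: "0 < n" and \<omega>: "\<omega> ^ n = 1"
  obtains j where "\<omega> = \<zeta> ^ j"
proof -
  have "\<zeta> \<noteq> 0" using \<zeta> n by (auto simp: primitive_root_unity_def power_0_left)
  have distinct: "\<zeta> ^ i \<noteq> \<zeta> ^ j" if "i < j" "j < n" for i j
  proof
    assume "\<zeta> ^ i = \<zeta> ^ j"
    moreover have "\<zeta> ^ j = \<zeta> ^ i * \<zeta> ^ (j - i)"
      using that by (simp add: power_add[symmetric])
    ultimately have "\<zeta> ^ (j - i) = 1" using \<open>\<zeta> \<noteq> 0\<close> by simp
    with \<zeta> that show False unfolding primitive_root_unity_def by auto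
  qed
  have "inj_on (\<lambda>j. \<zeta> ^ j) {..<n}"
    by (intro inj_onI) (metis distinct lessThan_iff linorder_neqE_nat)
  then have "card ((\<lambda>j. \<zeta> ^ j) ` {..<n}) = card {z::complex. z ^ n = 1}"
    by (simp add: card_image card_roots_unity_eq n)
  moreover have "(\<lambda>j. \<zeta> ^ j) ` {..<n} \<subseteq> {z. z ^ n = 1}"
    using \<zeta> by (auto simp: primitive_root_unity_def power_mult[symmetric] mult.commute[of _ n] power_mult)
  ultimately have "(\<lambda>j. \<zeta> ^ j) ` {..<n} = {z. z ^ n = 1}"
    by (intro card_subset_eq finite_roots_unity) (use n in auto)
  with \<omega> that show ?thesis by blast
qed

lemma exists_sum_product_pair: "\<exists>p q. p + q = z \<and> p * q = (c::complex)"
proof (intro exI conjI)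
  let ?p = "(z + csqrt (z^2 - 4*c)) / 2"
  show "?p + (z - ?p) = z" by simp
  have "?p * (z - ?p) = (z^2 - (csqrt (z^2 - 4*c))^2) / 4"
    by (simp add: field_simps power2_eq_square)
  then show "?p * (z - ?p) = c" by simp
qed

lemma vieta_pair_unique:
  fixes x y A B :: "'a::idom"
  assumes "x + y = A + B" "x * y = A * B"
  shows "(x = A \<and> y = B) \<or> (x = B \<and> y = A)"
proof -
  have "(x - A) * (x - B) = x * x - (A + B) * x + A * B" by (simp add: algebra_simps)
  also have "\<dots> = x * x - (x + y) * x + x * y" using assms by simp
  also have "\<dots> = 0" by (simp add: algebra_simps)
  finally have "x = A \<or> x = B" by simp
  then show ?thesis using assms(1) by auto
qed

lemma map_poly_of_rat_diff: "map_poly (of_rat :: rat \<Rightarrow> 'a::field_char_0) (p - q) = map_poly of_rat p - map_poly of_rat q"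
  by (intro poly_eqI) (simp add: coeff_map_poly of_rat_diff)

lemma map_poly_of_rat_sum: "map_poly (of_rat :: rat \<Rightarrow> 'a::field_char_0) (sum g I) = (\<Sum>i\<in>I. map_poly of_rat (g i))"
proof (induction I rule: infinite_finite_induct)
  case (insert i I)
  have "map_poly (of_rat :: rat \<Rightarrow> 'a) (g i + sum g I) = map_poly of_rat (g i) + map_poly of_rat (sum g I)"
    by (intro poly_eqI) (simp add: coeff_map_poly of_rat_add)
  with insert show ?case by simp
qed simp_all

lemma poly_f_poly:
  "poly (map_poly of_rat (f_poly n d R)) z =
     dickson_D n (of_rat (d^2 - R)) z - 2 * of_rat d * of_rat (d^2 - R) ^ ((n - 1) div 2)"
  unfolding f_poly_def Let_def map_poly_of_rat_diff map_poly_of_rat_sum dickson_D_def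
  by (simp add: map_poly_pCons map_poly_monom poly_sum poly_monom of_rat_mult of_rat_divide
      of_rat_power of_rat_diff)

locale f_poly_roots =
  fixes n :: nat and d R :: rat and \<zeta> :: complex
  assumes odd_n: "odd n"
    and R_nonsquare: "\<not> (\<exists>q::rat. q ^ 2 = R)"
    and primitive: "primitive_root_unity n \<zeta>"
begin

abbreviation "f \<equiv> poly (map_poly of_rat (f_poly n d R))"
abbreviation "D \<equiv> (of_rat (d^2 - R) :: complex)"
abbreviation "s \<equiv> csqrt (of_rat R)"
abbreviation "k \<equiv> (n - 1) div 2"
abbreviation "A \<equiv> D^k * (of_rat d + s)"
abbreviation "B \<equiv> D^k * (of_rat d - s)"
abbreviation "\<tau> \<equiv> s * (\<zeta> - inverse \<zeta>)"

lemma n_eq: "n = 2 * k + 1"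
  using odd_n by (auto elim: oddE)

lemma n_pos: "0 < n"
  using odd_n by (cases n) auto

lemma D_nonzero: "D \<noteq> 0"
  using R_nonsquare by auto

lemma R_nonzero: "(of_rat R :: complex) \<noteq> 0"
  using R_nonsquare by (metis of_rat_eq_0_iff power_zero_numeral)

lemma s_nonzero: "s \<noteq> 0"
  using R_nonzero by simp

lemma A_plus_B: "A + B = 2 * of_rat d * D^k"
  by (simp add: algebra_simps)

lemma A_times_B: "A * B = D^n"
proof -
  have "A * B = (D^k)^2 * (of_rat d ^ 2 - s^2)"
    by (simp only: power2_eq_square) (simp add: algebra_simps)
  also have "of_rat d ^ 2 - s^2 = D" by (simp add: of_rat_diff of_rat_power)
  also have "(D^k)^2 * D = D^n" by (subst (2) n_eq) (simp add: power_add power_mult[symmetric] mult.commute)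
  finally show ?thesis .
qed

lemma f_sum_product: "a * b = D \<Longrightarrow> f (a + b) = a^n + b^n - (A + B)"
  using dickson_D_sum_prod[OF odd_n, of a b] by (simp only: poly_f_poly A_plus_B)

lemma f_root_split:
  assumes "f z = 0"
  obtains p q where "z = p + q" "p * q = D" "p^n = A" "q^n = B"
proof -
  obtain p q where z: "p + q = z" and pq: "p * q = D"
    using exists_sum_product_pair by blast
  have "p^n + q^n = A + B" using f_sum_product[OF pq] assms z by simp
  moreover have "p^n * q^n = A * B"
    unfolding A_times_B power_mult_distrib[symmetric] pq ..
  ultimately consider "p^n = A" "q^n = B" | "p^n = B" "q^n = A"
    using vieta_pair_unique by blast
  then show ?thesis
  proof cases
    case 1
    with that[of p q] z pq show ?thesis by simp
  next
    case 2
    with that[of q p] z pq show ?thesis by (simp add: add.commute mult.commute)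
  qed
qed

lemma zeta_nonzero: "\<zeta> \<noteq> 0" and zeta_pow_n: "\<zeta> ^ n = 1"
  using primitive n_pos unfolding primitive_root_unity_def by (auto simp: power_0_left)

context
  fixes F assumes F: "is_subfield F" and tau: "\<tau> \<in> F"
begin

lemma zeta_sum_in_subfield: "\<zeta>^j + inverse \<zeta>^j \<in> F"
proof -
  let ?w = "inverse \<zeta>"
  have zw: "\<zeta> * ?w = 1" "\<zeta>^2 * ?w^2 = 1"
    using zeta_nonzero by (simp_all add: power_mult_distrib[symmetric])
  have "(t * (x - y))^2 = t^2 * (x^2 + y^2 - 2 * (x * y))" for t x y :: complex
    by (simp add: power2_eq_square algebra_simps)
  then have "\<tau>^2 = of_rat R * (\<zeta>^2 + ?w^2 - 2)"
    using zw(1) by simp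
  then have "\<zeta>^2 + ?w^2 = \<tau>^2 / of_rat R + 2" using R_nonzero by (simp add: field_simps)
  then have sq: "\<zeta>^2 + ?w^2 \<in> F"
    using tau by (simp add: subfield_add subfield_divide subfield_power subfield_of_rat subfield_numeral F)
  have two: "1 + 1 \<in> F" by (intro subfield_add[OF F] subfield_1[OF F])
  have "1 * (\<zeta>^2)^(k+1) + 1 * (?w^2)^(k+1) \<in> F"
    using sq by (intro subfield_lucas[OF F zw(2) sq two]) simp
  moreover have "(x^2)^(k+1) = x" if "x^n = 1" for x :: complex
  proof -
    have "2 * (k+1) = n + 1" using n_eq by presburger
    then have "(x^2)^(k+1) = x^(n+1)" by (simp only: power_mult[symmetric])
    then show ?thesis using that by simp
  qed
  moreover have "?w^n = 1" by (simp add: power_inverse zeta_pow_n)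
  ultimately have "\<zeta> + ?w \<in> F" using zeta_pow_n by (simp only: mult_1_left)
  then have "1 * \<zeta>^j + 1 * ?w^j \<in> F"
    by (intro subfield_lucas[OF F zw(1) _ two]) simp_all
  then show ?thesis by simp
qed

lemma zeta_diff_in_subfield: "s * (\<zeta>^j - inverse \<zeta>^j) \<in> F"
proof -
  have "\<zeta> * inverse \<zeta> = 1" "\<zeta> + inverse \<zeta> \<in> F"
    using zeta_nonzero zeta_sum_in_subfield[of 1] by simp_all
  from subfield_lucas[OF F this, of s "- s"] tau show ?thesis
    by (simp add: subfield_0[OF F] algebra_simps power_inverse)
qed

end

end

locale f_poly_root_pair = f_poly_roots +
  fixes a b :: complex
  assumes a_times_b: "a * b = D" and a_pow: "a^n = A" and b_pow: "b^n = B"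
begin

abbreviation "V \<equiv> complete_hom a b (n - 1)"

lemma f_root_twist:
  assumes "x^n = 1" "y^n = 1" "x * y = 1"
  shows "f (a * x + b * y) = 0"
proof -
  have "(a * x) * (b * y) = D" using assms(3) a_times_b by (simp add: algebra_simps)
  then show ?thesis
    using f_sum_product assms(1,2) a_pow b_pow by (simp add: power_mult_distrib)
qed

lemma f_root_sum: "f (a + b) = 0"
proof -
  have "f (a * 1 + b * 1) = 0" by (rule f_root_twist) simp_all
  then show ?thesis by (simp only: mult_1_right)
qed

lemma f_root_iff: "f z = 0 \<longleftrightarrow> (\<exists>j. z = a * \<zeta>^j + b * inverse \<zeta>^j)"
proof
  assume "f z = 0"
  then obtain p q where z: "z = p + q" and pq: "p * q = D" and p: "p^n = A"
    by (rule f_root_split)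
  have "a \<noteq> 0" using a_times_b D_nonzero by auto
  have "(p / a)^n = a^n / a^n" by (simp only: power_divide p a_pow)
  with \<open>a \<noteq> 0\<close> have "(p / a)^n = 1" by simp
  then obtain j where "p / a = \<zeta>^j"
    using power_of_primitive_root_unity[OF primitive n_pos] by blast
  with \<open>a \<noteq> 0\<close> have p: "p = a * \<zeta>^j" by (simp add: field_simps)
  with pq a_times_b have "a * (\<zeta>^j * q) = a * b" by (simp add: mult.assoc)
  with \<open>a \<noteq> 0\<close> have "\<zeta>^j * q = b" by simp
  then have "q = b * inverse \<zeta>^j"
    using zeta_nonzero by (auto simp: field_simps power_inverse)
  with z p show "\<exists>j. z = a * \<zeta>^j + b * inverse \<zeta>^j" by blast
next
  assume "\<exists>j. z = a * \<zeta>^j + b * inverse \<zeta>^j"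
  then obtain j where "z = a * \<zeta>^j + b * inverse \<zeta>^j" ..
  moreover have "(x^j)^n = 1" if "x^n = 1" for x :: complex
  proof -
    have "(x^j)^n = (x^n)^j" by (simp only: power_mult[symmetric] mult.commute)
    then show ?thesis using that by simp
  qed
  then have "(\<zeta>^j)^n = 1" "(inverse \<zeta>^j)^n = 1"
    using zeta_pow_n by (simp_all add: power_inverse)
  moreover have "\<zeta>^j * inverse \<zeta>^j = 1"
    using zeta_nonzero by (simp add: power_inverse)
  ultimately show "f z = 0" using f_root_twist by simp
qed

lemma a_minus_b: "(a - b) * V = 2 * D^k * s"
proof -
  have "Suc (n - 1) = n" using n_eq by presburger
  then have "(a - b) * V = A - B" using diff_times_complete_hom[of a b "n - 1"] a_pow b_pow by simp
  then show ?thesis by (simp add: algebra_simps)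
qed

lemma V_nonzero: "V \<noteq> 0"
  using a_minus_b D_nonzero s_nonzero by auto

lemma V_in_subfield: "is_subfield F \<Longrightarrow> a + b \<in> F \<Longrightarrow> V \<in> F"
  using dickson_E_sum_prod[of "n - 1" a b] a_times_b
  by (metis subfield_dickson_E subfield_of_rat)

lemma f_root_in_gen_field: "f z = 0 \<Longrightarrow> z \<in> gen_field {a + b, \<tau>}"
proof -
  let ?G = "gen_field {a + b, \<tau>}"
  have G: "is_subfield ?G" "a + b \<in> ?G" "\<tau> \<in> ?G"
    using is_subfield_gen_field gen_field_superset by blast+
  assume "f z = 0"
  then obtain j where z: "z = a * \<zeta>^j + b * inverse \<zeta>^j"
    using f_root_iff by blast
  let ?c = "\<zeta>^j + inverse \<zeta>^j" and ?t = "s * (\<zeta>^j - inverse \<zeta>^j)"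
  have "z = ((a + b) * ?c + (a - b) * (\<zeta>^j - inverse \<zeta>^j)) / 2"
    unfolding z by (simp add: algebra_simps)
  also have "a - b = 2 * D^k / V * s"
    using a_minus_b V_nonzero by (simp add: field_simps)
  finally have z: "z = ((a + b) * ?c + 2 * D^k / V * ?t) / 2"
    by (simp only: mult.assoc)
  have "(x * c + 2 * D^k / v * t) / 2 \<in> ?G" if "x \<in> ?G" "c \<in> ?G" "t \<in> ?G" "v \<in> ?G" for x c t v
    using that by (intro subfield_divide[OF G(1)] subfield_add[OF G(1)] subfield_mult[OF G(1)]
        subfield_power[OF G(1)] subfield_of_rat[OF G(1)] subfield_numeral[OF G(1)])
  moreover have "?c \<in> ?G" "?t \<in> ?G" "V \<in> ?G"
    using zeta_sum_in_subfield zeta_diff_in_subfield V_in_subfield G by blast+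
  ultimately show ?thesis
    unfolding z using G(2) by blast
qed

lemma tau_in_splitting_field: "\<tau> \<in> splitting_field (f_poly n d R)"
proof -
  let ?L = "splitting_field (f_poly n d R)"
  have L: "is_subfield ?L" unfolding splitting_field_def by (rule is_subfield_gen_field)
  have root: "z \<in> ?L" if "f z = 0" for z
    unfolding splitting_field_def using that by (intro subsetD[OF gen_field_superset] CollectI)
  let ?w = "inverse \<zeta>"
  have w: "?w^n = 1" "\<zeta> * ?w = 1" "?w * \<zeta> = 1"
    using zeta_pow_n zeta_nonzero by (simp_all add: power_inverse)
  let ?u1 = "a * \<zeta> + b * ?w" and ?u2 = "a * ?w + b * \<zeta>"
  have "(?u1 - ?u2) * V = (a - b) * V * (\<zeta> - ?w)" by (simp add: algebra_simps)
  also have "\<dots> = 2 * D^k * \<tau>" by (simp only: a_minus_b mult.assoc)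
  finally have tau: "\<tau> = (?u1 - ?u2) * V / (2 * D^k)"
    using D_nonzero by (simp add: eq_divide_eq mult.commute)
  have "(x1 - x2) * v / (2 * D^k) \<in> ?L" if "x1 \<in> ?L" "x2 \<in> ?L" "v \<in> ?L" for x1 x2 v
    using that by (intro subfield_divide[OF L] subfield_diff[OF L] subfield_mult[OF L]
        subfield_power[OF L] subfield_of_rat[OF L] subfield_numeral[OF L])
  moreover have "?u1 \<in> ?L" "?u2 \<in> ?L" "a + b \<in> ?L"
    using root[OF f_root_twist[OF zeta_pow_n w(1,2)]] root[OF f_root_twist[OF w(1) zeta_pow_n w(3)]]
      root[OF f_root_sum] by simp_all
  ultimately show ?thesis
    unfolding tau using V_in_subfield[OF L] by blast
qed

lemma splitting_field_eq: "splitting_field (f_poly n d R) = gen_field {a + b, \<tau>}"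
  unfolding splitting_field_def
proof (rule gen_field_eqI)
  show "{z. f z = 0} \<subseteq> gen_field {a + b, \<tau>}"
  proof
    fix z :: complex assume "z \<in> {z. f z = 0}"
    then show "z \<in> gen_field {a + b, \<tau>}" by (intro f_root_in_gen_field) (rule CollectD)
  qed
  have "a + b \<in> gen_field {z. f z = 0}"
    using f_root_sum by (intro subsetD[OF gen_field_superset] CollectI)
  moreover have "\<tau> \<in> gen_field {z. f z = 0}"
    using tau_in_splitting_field unfolding splitting_field_def .
  ultimately show "{a + b, \<tau>} \<subseteq> gen_field {z. f z = 0}" by (simp only: insert_subset empty_subsetI simp_thms)
qed

end

theorem proposition2:
  fixes n :: nat and d R :: rat and \<zeta> u :: complex
  assumes "n \<ge> 3" and "odd n"
    and "d \<noteq> 0"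
    and "\<not> (\<exists>q::rat. q ^ 2 = R)"
    and "primitive_root_unity n \<zeta>"
    and "poly (map_poly of_rat (f_poly n d R)) u = 0"
  shows "splitting_field (f_poly n d R) =
         composite (gen_field {u}) (gen_field {csqrt (of_rat R) * (\<zeta> - inverse \<zeta>)})"
proof -
  interpret f_poly_roots n d R \<zeta>
    using assms by unfold_locales
  obtain a b where u: "u = a + b" and "a * b = D" "a^n = A" "b^n = B"
    using f_root_split[OF assms(6)] by blast
  then interpret f_poly_root_pair n d R \<zeta> a b
    by unfold_locales
  show ?thesis
    unfolding composite_gen_field splitting_field_eq u by (simp add: insert_commute)
qed

end
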